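(* Let $n\ge1$. If $\{H_1,H_2\}$ is a Hamilton decomposition of $G_{n,2}$ and $\{E_1,\dots,E_n\}$ is a Hamilton decomposition of $Q_{2n}$ (each $E_i$ taken as a directed Hamilton cycle starting at $\mathbf 0$), then $\{f(E_i,H_j): 1\le i\le n,\ 1\le j\le 2\}$ is a Hamilton decomposition of $Q_{4n}$.
   Context: A Hamilton decomposition of a graph is a partition of its edge set into edge-disjoint Hamilton cycles. The hypercube $Q_{2n}$ is realized as the graph whose vertices are the quaternary strings $q_1\cdots q_n$, $q_i\in\{0,1,2,3\}$, adjacent iff they differ in exactly one position and there by $\pm1\pmod 4$; $\mathbf 0=0\cdots0$. $G_{n,k}=C_{4^n}\Box\cdots\Box C_{4^n}$ ($k$ factors) has vertex set $(\mathbb Z/4^n\mathbb Z)^k$, vertices adjacent iff they differ in exactly one coordinate and there by $\pm1\pmod{4^n}$. For a directed Hamilton cycle $E$ of $Q_{2n}$ listing vertices $e_0=\mathbf 0,e_1,\dots,e_{4^n-1}$, put $\pi_E(e_p)=p$. Identify $V(Q_{4n})$ with pairs $(u,w)$ of quaternary strings of length $n$ ($Q_{4n}=Q_{2n}\Box Q_{2n}$), and let $\Phi_E(u,w)=(\pi_E(u),\pi_E(w))\in V(G_{n,2})$; $\Phi_E^{-1}$ maps edges of $G_{n,2}$ to edges of $Q_{4n}$. For a Hamilton cycle $H$ of $G_{n,2}$, $f(E,H):=\Phi_E^{-1}(H)$. *)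

theory Defs
  imports Main
begin

definition cycle_edges :: "'a list \<Rightarrow> 'a set set" where
  "cycle_edges vs = {{vs ! i, vs ! ((i + 1) mod length vs)} | i. i < length vs}"

definition ham_list :: "'a set \<Rightarrow> 'a set set \<Rightarrow> 'a list \<Rightarrow> bool" where
  "ham_list V E vs \<longleftrightarrow> distinct vs \<and> set vs = V \<and> 3 \<le> length vs \<and> cycle_edges vs \<subseteq> E"

definition ham_cycle :: "'a set \<Rightarrow> 'a set set \<Rightarrow> 'a set set \<Rightarrow> bool" where
  "ham_cycle V E C \<longleftrightarrow> (\<exists>vs. ham_list V E vs \<and> C = cycle_edges vs)"

definition ham_decomp :: "'a set \<Rightarrow> 'a set set \<Rightarrow> 'i set \<Rightarrow> ('i \<Rightarrow> 'a set set) \<Rightarrow> bool" where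
  "ham_decomp V E I C \<longleftrightarrow>
     (\<forall>i\<in>I. ham_cycle V E (C i)) \<and>
     (\<forall>i\<in>I. \<forall>j\<in>I. i \<noteq> j \<longrightarrow> C i \<inter> C j = {}) \<and>
     (\<Union>i\<in>I. C i) = E"

section \<open>The hypercube Q_{2n} on quaternary strings of length n\<close>

definition QV :: "nat \<Rightarrow> nat list set" where
  "QV n = {u. length u = n \<and> set u \<subseteq> {0..<4}}"

definition qadj :: "nat list \<Rightarrow> nat list \<Rightarrow> bool" where
  "qadj u v \<longleftrightarrow> length u = length v \<and>
     (\<exists>k < length u. (\<forall>j < length u. j \<noteq> k \<longrightarrow> u ! j = v ! j) \<and>
        (u ! k = (v ! k + 1) mod 4 \<or> v ! k = (u ! k + 1) mod 4))"

definition QE :: "nat \<Rightarrow> nat list set set" where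
  "QE n = {{u, v} | u v. u \<in> QV n \<and> v \<in> QV n \<and> qadj u v}"

text \<open>Q_{4n}, with vertices identified with pairs (u,w) of strings of length n
  (the string of length 2n being u followed by w).\<close>
definition QV2 :: "nat \<Rightarrow> (nat list \<times> nat list) set" where
  "QV2 n = QV n \<times> QV n"

definition QE2 :: "nat \<Rightarrow> (nat list \<times> nat list) set set" where
  "QE2 n = {{(u, w), (u', w')} | u w u' w'.
     (u, w) \<in> QV2 n \<and> (u', w') \<in> QV2 n \<and> qadj (u @ w) (u' @ w')}"

definition GV :: "nat \<Rightarrow> (nat \<times> nat) set" where
  "GV n = {0..<4 ^ n} \<times> {0..<4 ^ n}"

definition cadj :: "nat \<Rightarrow> nat \<Rightarrow> nat \<Rightarrow> bool" where
  "cadj N a b \<longleftrightarrow> a = (b + 1) mod N \<or> b = (a + 1) mod N"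

definition GE :: "nat \<Rightarrow> (nat \<times> nat) set set" where
  "GE n = {{(a, b), (c, d)} | a b c d.
     (a, b) \<in> GV n \<and> (c, d) \<in> GV n \<and>
     ((a = c \<and> cadj (4 ^ n) b d) \<or> (b = d \<and> cadj (4 ^ n) a c))}"

definition pos :: "'a list \<Rightarrow> 'a \<Rightarrow> nat" where
  "pos es v = (THE p. p < length es \<and> es ! p = v)"

definition Phi :: "nat list list \<Rightarrow> nat list \<times> nat list \<Rightarrow> nat \<times> nat" where
  "Phi es x = (pos es (fst x), pos es (snd x))"

definition fmap :: "nat \<Rightarrow> nat list list \<Rightarrow> (nat \<times> nat) set set \<Rightarrow> (nat list \<times> nat list) set set" where
  "fmap n es H = {{x, y} | x y. x \<in> QV2 n \<and> y \<in> QV2 n \<and> {Phi es x, Phi es y} \<in> H}"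

end

theory Submission
  imports Defs
begin

text \<open>The map \<open>\<Phi>\<^sub>E\<close> is a bijection from the vertices of \<open>Q\<^sub>4\<^sub>n = Q\<^sub>2\<^sub>n \<box> Q\<^sub>2\<^sub>n\<close> onto the
  torus \<open>G\<^sub>n\<^sub>,\<^sub>2\<close>, and since consecutive vertices of \<open>E\<close> sit at adjacent positions of
  the cycle of length \<open>4\<^sup>n\<close>, it maps the edges of the spanning subgraph \<open>E \<box> E\<close> exactly onto the edges
  of the torus. So \<open>f(E,H\<^sub>1), f(E,H\<^sub>2)\<close> are Hamilton cycles decomposing \<open>E \<box> E\<close>; as the
  \<open>E\<^sub>i\<close> partition the edges of \<open>Q\<^sub>2\<^sub>n\<close>, the graphs \<open>E\<^sub>i \<box> E\<^sub>i\<close> partition the edges of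
  \<open>Q\<^sub>4\<^sub>n\<close>.\<close>

lemma pos_nth: "distinct es \<Longrightarrow> i < length es \<Longrightarrow> pos es (es ! i) = i"
  unfolding pos_def by (rule the_equality) (auto simp: nth_eq_iff_index_eq)

lemma nth_pos: "distinct es \<Longrightarrow> v \<in> set es \<Longrightarrow> pos es v < length es \<and> es ! pos es v = v"
  by (metis in_set_conv_nth pos_nth)

lemma pos_eq_iff:
  "distinct es \<Longrightarrow> u \<in> set es \<Longrightarrow> v \<in> set es \<Longrightarrow> pos es u = pos es v \<longleftrightarrow> u = v"
  by (metis nth_pos)

lemma cycle_edges_iff_cadj_pos:
  assumes "distinct es"
  shows "{u, v} \<in> cycle_edges es \<longleftrightarrow>
    u \<in> set es \<and> v \<in> set es \<and> cadj (length es) (pos es u) (pos es v)"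
proof
  assume "{u, v} \<in> cycle_edges es"
  then obtain i where i: "i < length es" "{u, v} = {es ! i, es ! ((i + 1) mod length es)}"
    unfolding cycle_edges_def by auto
  then have "(i + 1) mod length es < length es" by (cases es) auto
  with i show "u \<in> set es \<and> v \<in> set es \<and> cadj (length es) (pos es u) (pos es v)"
    by (auto simp: doubleton_eq_iff cadj_def pos_nth[OF assms])
next
  assume "u \<in> set es \<and> v \<in> set es \<and> cadj (length es) (pos es u) (pos es v)"
  then have u: "pos es u < length es" "es ! pos es u = u"
    and v: "pos es v < length es" "es ! pos es v = v"
    and adj: "pos es u = (pos es v + 1) mod length es \<or> pos es v = (pos es u + 1) mod length es"
    using nth_pos[OF assms] unfolding cadj_def by auto
  have "{es ! i, es ! ((i + 1) mod length es)} \<in> cycle_edges es" if "i < length es" for i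
    using that unfolding cycle_edges_def by blast
  with u v adj show "{u, v} \<in> cycle_edges es"
    by (metis insert_commute)
qed

lemma cycle_edges_conv_image:
  "cycle_edges vs = (\<lambda>i. {vs ! i, vs ! ((i + 1) mod length vs)}) ` {..<length vs}"
  unfolding cycle_edges_def by auto

lemma cycle_edges_map: "cycle_edges (map g vs) = (`) g ` cycle_edges vs"
  unfolding cycle_edges_conv_image image_image
proof (rule image_cong)
  fix i assume "i \<in> {..<length vs}"
  then have "(i + 1) mod length vs < length vs" by (cases vs) auto
  then show "{map g vs ! i, map g vs ! ((i + 1) mod length (map g vs))} =
    g ` {vs ! i, vs ! ((i + 1) mod length vs)}"
    using \<open>i \<in> _\<close> by simp
qed simp

lemma ham_cycle_image:
  assumes "ham_cycle V A C" "bij_betw g V V'" "\<And>e. e \<in> C \<Longrightarrow> g ` e \<in> A'"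
  shows "ham_cycle V' A' ((`) g ` C)"
proof -
  obtain vs where vs: "ham_list V A vs" and C: "C = cycle_edges vs"
    using assms(1) unfolding ham_cycle_def by blast
  have "ham_list V' A' (map g vs)"
    using vs assms(2,3) unfolding ham_list_def C cycle_edges_map bij_betw_def
    by (auto simp: distinct_map)
  then show ?thesis
    unfolding ham_cycle_def C by (metis cycle_edges_map)
qed

lemma ham_cycle_mono: "ham_cycle V A C \<Longrightarrow> A \<subseteq> A' \<Longrightarrow> ham_cycle V A' C"
  unfolding ham_cycle_def ham_list_def by blast

lemma ham_decomp_UN:
  assumes decomp: "\<And>i. i \<in> I \<Longrightarrow> ham_decomp V (B i) J (F i)"
    and disjoint: "\<And>i i'. i \<in> I \<Longrightarrow> i' \<in> I \<Longrightarrow> i \<noteq> i' \<Longrightarrow> B i \<inter> B i' = {}"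
  shows "ham_decomp V (\<Union>i\<in>I. B i) (I \<times> J) (\<lambda>(i, j). F i j)"
proof -
  have Un: "(\<Union>j\<in>J. F i j) = B i" if "i \<in> I" for i
    using decomp[OF that] unfolding ham_decomp_def by blast
  have cycle: "ham_cycle V (B i) (F i j)" and sub: "F i j \<subseteq> B i"
    and disj: "\<And>j'. j' \<in> J \<Longrightarrow> j \<noteq> j' \<Longrightarrow> F i j \<inter> F i j' = {}"
    if "i \<in> I" "j \<in> J" for i j
    using decomp[OF that(1)] that(2) unfolding ham_decomp_def by blast+
  have "ham_cycle V (\<Union>i\<in>I. B i) (F i j)" if "i \<in> I" "j \<in> J" for i j
    using cycle[OF that] by (rule ham_cycle_mono) (use that(1) in blast)
  moreover have "F i j \<inter> F i' j' = {}"
    if "i \<in> I" "j \<in> J" "i' \<in> I" "j' \<in> J" "(i, j) \<noteq> (i', j')" for i j i' j'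
  proof (cases "i = i'")
    case True
    then show ?thesis using disj that by blast
  next
    case False
    then show ?thesis using disjoint sub that by blast
  qed
  moreover have "(\<Union>(i, j)\<in>I \<times> J. F i j) = (\<Union>i\<in>I. B i)"
    using Un by blast
  ultimately show ?thesis
    unfolding ham_decomp_def by auto
qed

definition box_edges :: "'a set \<Rightarrow> 'a set set \<Rightarrow> ('a \<times> 'a) set set" where
  "box_edges V A = {{(u, w), (u', w')} | u w u' w'. (u, w) \<in> V \<times> V \<and> (u', w') \<in> V \<times> V \<and>
     (u = u' \<and> {w, w'} \<in> A \<or> w = w' \<and> {u, u'} \<in> A)}"

lemma box_edges_UN: "box_edges V (\<Union>i\<in>I. A i) = (\<Union>i\<in>I. box_edges V (A i))"
  unfolding box_edges_def by blast

lemma box_edges_disjoint: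
  assumes "A \<inter> B = {}" "\<And>v. {v} \<notin> A"
  shows "box_edges V A \<inter> box_edges V B = {}"
  using assms unfolding box_edges_def disjoint_iff by (auto simp: doubleton_eq_iff insert_commute)

lemma qadj_irrefl: "\<not> qadj u u"
proof -
  have "(a::nat) \<noteq> (a + 1) mod 4" for a
    by presburger
  then show ?thesis
    unfolding qadj_def by auto
qed

lemma doubleton_in_QE_iff: "{u, v} \<in> QE n \<longleftrightarrow> u \<in> QV n \<and> v \<in> QV n \<and> qadj u v"
  unfolding QE_def qadj_def by (auto simp: doubleton_eq_iff)

lemma singleton_notin_QE: "{v} \<notin> QE n"
  using doubleton_in_QE_iff[of v v] qadj_irrefl by simp

lemma qadj_append:
  assumes "length u = n" "length u' = n" "length w = n" "length w' = n"
  shows "qadj (u @ w) (u' @ w') \<longleftrightarrow> (u = u' \<and> qadj w w') \<or> (w = w' \<and> qadj u u')"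
proof -
  have all_split: "(\<forall>j<n + n. P j) \<longleftrightarrow> (\<forall>j<n. P j) \<and> (\<forall>j<n. P (n + j))" for P
    by (metis add_diff_inverse_nat add_less_cancel_left not_less trans_less_add1)
  have ex_split: "(\<exists>j<n + n. P j) \<longleftrightarrow> (\<exists>j<n. P j) \<or> (\<exists>j<n. P (n + j))" for P
    by (metis add_diff_inverse_nat add_less_cancel_left not_less trans_less_add1)
  show ?thesis
    unfolding qadj_def using assms
    by (simp add: all_split ex_split nth_append list_eq_iff_nth_eq) blast
qed

lemma QE2_eq_box_edges: "QE2 n = box_edges (QV n) (QE n)"
proof -
  have adj: "qadj (u @ w) (u' @ w') \<longleftrightarrow> u = u' \<and> qadj w w' \<or> w = w' \<and> qadj u u'"
    if "u \<in> QV n" "w \<in> QV n" "u' \<in> QV n" "w' \<in> QV n" for u w u' w'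
    using that by (intro qadj_append) (auto simp: QV_def)
  show ?thesis
    unfolding QE2_def box_edges_def QV2_def doubleton_in_QE_iff mem_Times_iff fst_conv snd_conv
    using adj by blast
qed

lemma fmap_empty: "fmap n es {} = {}"
  unfolding fmap_def by simp

lemma fmap_mono: "H \<subseteq> H' \<Longrightarrow> fmap n es H \<subseteq> fmap n es H'"
  unfolding fmap_def by blast

lemma fmap_UN: "fmap n es (\<Union>j\<in>J. H j) = (\<Union>j\<in>J. fmap n es (H j))"
  unfolding fmap_def by blast

lemma mem_fmap_iff:
  "e \<in> fmap n es H \<longleftrightarrow> (\<exists>x y. e = {x, y} \<and> x \<in> QV2 n \<and> y \<in> QV2 n) \<and> Phi es ` e \<in> H"
proof
  assume "e \<in> fmap n es H"
  then obtain x y where "e = {x, y}" "x \<in> QV2 n" "y \<in> QV2 n" "{Phi es x, Phi es y} \<in> H"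
    unfolding fmap_def by blast
  then show "(\<exists>x y. e = {x, y} \<and> x \<in> QV2 n \<and> y \<in> QV2 n) \<and> Phi es ` e \<in> H"
    by (auto simp del: split_paired_Ex)
next
  assume "(\<exists>x y. e = {x, y} \<and> x \<in> QV2 n \<and> y \<in> QV2 n) \<and> Phi es ` e \<in> H"
  then obtain x y where "e = {x, y}" "x \<in> QV2 n" "y \<in> QV2 n" "{Phi es x, Phi es y} \<in> H"
    by (auto simp del: split_paired_Ex)
  then show "e \<in> fmap n es H"
    unfolding fmap_def by blast
qed

lemma fmap_Int: "fmap n es H \<inter> fmap n es H' = fmap n es (H \<inter> H')"
  by (auto simp: mem_fmap_iff simp del: split_paired_Ex)

lemma doubleton_in_GE_iff:
  "{p, q} \<in> GE n \<longleftrightarrow> p \<in> GV n \<and> q \<in> GV n \<and>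
     (fst p = fst q \<and> cadj (4 ^ n) (snd p) (snd q) \<or> snd p = snd q \<and> cadj (4 ^ n) (fst p) (fst q))"
  unfolding GE_def cadj_def by (cases p; cases q) (auto simp: doubleton_eq_iff)

lemma card_QV: "card (QV n) = 4 ^ n"
proof -
  have "QV n = {xs. set xs \<subseteq> {0..<4} \<and> length xs = n}"
    unfolding QV_def by auto
  then show ?thesis
    using card_lists_length_eq[of "{0..<4::nat}" n] by simp
qed

definition Phi_inv :: "'a list \<Rightarrow> nat \<times> nat \<Rightarrow> 'a \<times> 'a" where
  "Phi_inv es = map_prod ((!) es) ((!) es)"

context
  fixes n :: nat and E :: "nat list list"
  assumes E: "ham_list (QV n) (QE n) E"
begin

lemma distinct_E: "distinct E" and set_E: "set E = QV n" and length_E: "length E = 4 ^ n"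
  using E card_QV distinct_card unfolding ham_list_def by metis+

lemma Phi_inv_Phi: "x \<in> QV2 n \<Longrightarrow> Phi_inv E (Phi E x) = x"
  using nth_pos[OF distinct_E] set_E unfolding QV2_def Phi_def Phi_inv_def by (cases x) auto

lemma Phi_Phi_inv: "p \<in> GV n \<Longrightarrow> Phi E (Phi_inv E p) = p"
  using pos_nth[OF distinct_E] length_E unfolding GV_def Phi_def Phi_inv_def by (cases p) auto

lemma Phi_in_GV: "x \<in> QV2 n \<Longrightarrow> Phi E x \<in> GV n"
  using nth_pos[OF distinct_E] set_E length_E unfolding QV2_def GV_def Phi_def by (cases x) auto

lemma bij_betw_Phi_inv: "bij_betw (Phi_inv E) (GV n) (QV2 n)"
  unfolding Phi_inv_def GV_def QV2_def atLeast0LessThan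
  by (intro bij_betw_map_prod bij_betw_nth) (simp_all add: distinct_E set_E length_E)

lemma doubleton_Phi_in_GE_iff:
  assumes "(u, w) \<in> QV2 n" "(u', w') \<in> QV2 n"
  shows "{Phi E (u, w), Phi E (u', w')} \<in> GE n \<longleftrightarrow>
    u = u' \<and> {w, w'} \<in> cycle_edges E \<or> w = w' \<and> {u, u'} \<in> cycle_edges E"
proof -
  have "u \<in> set E" "w \<in> set E" "u' \<in> set E" "w' \<in> set E"
    using assms set_E unfolding QV2_def by auto
  then show ?thesis
    using Phi_in_GV[OF assms(1)] Phi_in_GV[OF assms(2)]
    unfolding doubleton_in_GE_iff
    by (simp add: Phi_def pos_eq_iff[OF distinct_E] cycle_edges_iff_cadj_pos[OF distinct_E] length_E)
qed

lemma fmap_GE: "fmap n E (GE n) = box_edges (QV n) (cycle_edges E)"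
proof (intro set_eqI iffI)
  fix e assume "e \<in> fmap n E (GE n)"
  then obtain u w u' w' where e: "e = {(u, w), (u', w')}" "(u, w) \<in> QV2 n" "(u', w') \<in> QV2 n"
    "{Phi E (u, w), Phi E (u', w')} \<in> GE n"
    unfolding fmap_def by auto
  then have "u = u' \<and> {w, w'} \<in> cycle_edges E \<or> w = w' \<and> {u, u'} \<in> cycle_edges E"
    using doubleton_Phi_in_GE_iff by blast
  with e show "e \<in> box_edges (QV n) (cycle_edges E)"
    unfolding box_edges_def QV2_def[symmetric] by blast
next
  fix e assume "e \<in> box_edges (QV n) (cycle_edges E)"
  then obtain u w u' w' where e: "e = {(u, w), (u', w')}" "(u, w) \<in> QV2 n" "(u', w') \<in> QV2 n"
    "u = u' \<and> {w, w'} \<in> cycle_edges E \<or> w = w' \<and> {u, u'} \<in> cycle_edges E"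
    unfolding box_edges_def QV2_def[symmetric] by blast
  then have "{Phi E (u, w), Phi E (u', w')} \<in> GE n"
    using doubleton_Phi_in_GE_iff by blast
  with e show "e \<in> fmap n E (GE n)"
    unfolding fmap_def by blast
qed

lemma fmap_eq_image:
  assumes "H \<subseteq> GE n"
  shows "fmap n E H = (`) (Phi_inv E) ` H"
proof
  show "fmap n E H \<subseteq> (`) (Phi_inv E) ` H"
  proof
    fix e assume "e \<in> fmap n E H"
    then obtain x y where "e = {x, y}" "x \<in> QV2 n" "y \<in> QV2 n" "{Phi E x, Phi E y} \<in> H"
      unfolding fmap_def by blast
    then have "e = Phi_inv E ` {Phi E x, Phi E y}"
      using Phi_inv_Phi by simp
    with \<open>{Phi E x, Phi E y} \<in> H\<close> show "e \<in> (`) (Phi_inv E) ` H" by blast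
  qed
  show "(`) (Phi_inv E) ` H \<subseteq> fmap n E H"
  proof
    fix e assume "e \<in> (`) (Phi_inv E) ` H"
    then obtain h where "h \<in> H" and e: "e = Phi_inv E ` h" by blast
    with assms obtain p q where h: "h = {p, q}" and "p \<in> GV n" "q \<in> GV n"
      unfolding GE_def by blast
    then have "Phi_inv E p \<in> QV2 n" "Phi_inv E q \<in> QV2 n"
      "{Phi E (Phi_inv E p), Phi E (Phi_inv E q)} = h"
      using bij_betw_apply[OF bij_betw_Phi_inv] Phi_Phi_inv by auto
    with \<open>h \<in> H\<close> show "e \<in> fmap n E H"
      unfolding fmap_def e h
      by (intro CollectI exI[of _ "Phi_inv E p"] exI[of _ "Phi_inv E q"]) simp
  qed
qed

lemma fmap_ham_cycle:
  assumes "ham_cycle (GV n) (GE n) H"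
  shows "ham_cycle (QV2 n) (box_edges (QV n) (cycle_edges E)) (fmap n E H)"
proof -
  have "H \<subseteq> GE n"
    using assms unfolding ham_cycle_def ham_list_def by auto
  then have "fmap n E H \<subseteq> box_edges (QV n) (cycle_edges E)"
    unfolding fmap_GE[symmetric] by (rule fmap_mono)
  then have "Phi_inv E ` e \<in> box_edges (QV n) (cycle_edges E)" if "e \<in> H" for e
    using that unfolding fmap_eq_image[OF \<open>H \<subseteq> GE n\<close>] by blast
  then show ?thesis
    unfolding fmap_eq_image[OF \<open>H \<subseteq> GE n\<close>] by (rule ham_cycle_image[OF assms bij_betw_Phi_inv])
qed

lemma fmap_ham_decomp:
  assumes "ham_decomp (GV n) (GE n) J H"
  shows "ham_decomp (QV2 n) (box_edges (QV n) (cycle_edges E)) J (\<lambda>j. fmap n E (H j))"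
  using assms fmap_ham_cycle fmap_Int fmap_empty
  unfolding ham_decomp_def fmap_GE[symmetric] fmap_UN[symmetric] by metis

end

theorem corollary1:
  fixes n :: nat
    and H :: "nat \<Rightarrow> (nat \<times> nat) set set"
    and es :: "nat \<Rightarrow> nat list list"
  assumes "1 \<le> n"
    and "ham_decomp (GV n) (GE n) {1, 2} H"
    and "\<forall>i\<in>{1..n}. ham_list (QV n) (QE n) (es i) \<and> es i ! 0 = replicate n 0"
    and "ham_decomp (QV n) (QE n) {1..n} (\<lambda>i. cycle_edges (es i))"
  shows "ham_decomp (QV2 n) (QE2 n) ({1..n} \<times> {1, 2}) (\<lambda>(i, j). fmap n (es i) (H j))"
proof -
  have E: "ham_list (QV n) (QE n) (es i)" if "i \<in> {1..n}" for i
    using assms(3) that by blast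
  have blocks: "ham_decomp (QV2 n) (box_edges (QV n) (cycle_edges (es i))) {1, 2} (\<lambda>j. fmap n (es i) (H j))"
    if "i \<in> {1..n}" for i
    using fmap_ham_decomp[OF E[OF that] assms(2)] .
  have disjoint: "box_edges (QV n) (cycle_edges (es i)) \<inter> box_edges (QV n) (cycle_edges (es i')) = {}"
    if "i \<in> {1..n}" "i' \<in> {1..n}" "i \<noteq> i'" for i i'
  proof (rule box_edges_disjoint)
    show "cycle_edges (es i) \<inter> cycle_edges (es i') = {}"
      using assms(4) that unfolding ham_decomp_def by blast
    show "{v} \<notin> cycle_edges (es i)" for v
      using E[OF that(1)] singleton_notin_QE unfolding ham_list_def by blast
  qed
  have "QE2 n = (\<Union>i\<in>{1..n}. box_edges (QV n) (cycle_edges (es i)))"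
    using assms(4) unfolding QE2_eq_box_edges box_edges_UN[symmetric] ham_decomp_def by simp
  then show ?thesis
    using ham_decomp_UN[of "{1..n}", OF blocks disjoint] by simp
qed

end
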